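(* Consider the two-layer multi-item order fulfillment problem described in the context with time-invariant variable costs, any $K\ge 1$, and any given fixed costs $f_0\ge0$, $f_1,\dots,f_K>0$. Then every online fulfillment policy $\mathrm{ALG}$ (deterministic or randomized) satisfies \[\mathfrak R_{\mathrm{inv}}(\mathrm{ALG})\ge\frac{f_0+\sum_{k\in[K]}f_k}{\min_{k\in[K]}f_k}.\]
   Context: Problem. $n$ items, $K$ FDCs indexed $k\in[K]$, an RDC indexed $k=0$ with unlimited inventory. FDC $k$ initially holds $I_{k,0}^i\ge0$ units of item $i$, never replenished. In periods $t=1,\dots,T$ an order $\boldsymbol S_t=(S_t^i)_i$ of nonnegative integers arrives; the policy must immediately and irrevocably choose $m_{k,t}^i\ge0$ with $\sum_{k=0}^Km_{k,t}^i=S_t^i$ and $m_{k,t}^i\le I_{k,t-1}^i$ ($k\in[K]$), $I_{k,t}^i=I_{k,0}^i-\sum_{\tau\le t}m_{k,\tau}^i$. Period cost $\sum_{k=0}^K[f_k\mathbb{I}(\sum_im_{k,t}^i>0)+\sum_ic_{k,t}^im_{k,t}^i]$; total cost is the sum. An online policy (possibly randomized) decides in period $t$ using only fixed costs, initial inventories and orders/variable costs up to $t$. $\mathrm{ALG}(I)$: (expected) total cost on instance $I$; $\mathrm{OPT}(I)$: offline optimal total cost. $\mathfrak R_{\mathrm{inv}}(\mathrm{ALG})$ is the supremum of $\mathrm{ALG}(I)/\mathrm{OPT}(I)$ over all $n,T$, initial inventories, nonnegative time-invariant variable costs $c_{k,t}^i=c_k^i$ and order sequences. *)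

theory Defs
  imports "HOL-Probability.Probability"
begin

text \<open>Facilities are indexed by k = 0 (the RDC, unlimited inventory) and k = 1..K (the FDCs);
items are indexed by i < n; periods by list positions t < T (position t is period t+1).

An order is a function nat => nat (item => quantity).  A decision for one period is
m :: nat => nat => nat with m k i = quantity of item i shipped from facility k.
Initial inventories I0 k i and variable costs c k i (time invariant).\<close>

type_synonym order = "nat \<Rightarrow> nat"
type_synonym decision = "nat \<Rightarrow> nat \<Rightarrow> nat"

text \<open>A deterministic online policy: in each period it sees the number of items n, the initial
inventories, the (time-invariant) variable costs and the list of orders received so far
(including the current one), and outputs the current period's decision.  The fixed costs
and K are fixed in advance, so the policy may depend on them implicitly.\<close>
type_synonym policy = "nat \<Rightarrow> (nat \<Rightarrow> nat \<Rightarrow> nat) \<Rightarrow> (nat \<Rightarrow> nat \<Rightarrow> real) \<Rightarrow> order list \<Rightarrow> decision"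

definition valid_inst :: "nat \<Rightarrow> nat \<Rightarrow> (nat \<Rightarrow> nat \<Rightarrow> nat) \<Rightarrow> (nat \<Rightarrow> nat \<Rightarrow> real) \<Rightarrow> order list \<Rightarrow> bool" where
  "valid_inst K n I0 c S \<longleftrightarrow>
     (\<forall>k i. (k = 0 \<or> K < k \<or> n \<le> i) \<longrightarrow> I0 k i = 0) \<and>
     (\<forall>k i. (K < k \<or> n \<le> i) \<longrightarrow> c k i = 0) \<and>
     (\<forall>k\<le>K. \<forall>i<n. 0 \<le> c k i) \<and>
     (\<forall>s\<in>set S. \<forall>i. n \<le> i \<longrightarrow> s i = 0)"

definition feasible :: "nat \<Rightarrow> nat \<Rightarrow> (nat \<Rightarrow> nat \<Rightarrow> nat) \<Rightarrow> order list \<Rightarrow> (nat \<Rightarrow> decision) \<Rightarrow> bool" where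
  "feasible K n I0 S m \<longleftrightarrow>
     (\<forall>t<length S. \<forall>i<n.
        (\<Sum>k\<le>K. m t k i) = (S ! t) i \<and>
        (\<forall>k\<in>{1..K}. (\<Sum>\<tau>\<le>t. m \<tau> k i) \<le> I0 k i))"

definition total_cost :: "nat \<Rightarrow> (nat \<Rightarrow> real) \<Rightarrow> (nat \<Rightarrow> nat \<Rightarrow> real) \<Rightarrow> nat \<Rightarrow> nat \<Rightarrow> (nat \<Rightarrow> decision) \<Rightarrow> real" where
  "total_cost K f c n T m =
     (\<Sum>t<T. \<Sum>k\<le>K. f k * (if (\<Sum>i<n. m t k i) > 0 then 1 else 0)
                     + (\<Sum>i<n. c k i * real (m t k i)))"

definition OPT :: "nat \<Rightarrow> (nat \<Rightarrow> real) \<Rightarrow> nat \<Rightarrow> (nat \<Rightarrow> nat \<Rightarrow> nat) \<Rightarrow> (nat \<Rightarrow> nat \<Rightarrow> real) \<Rightarrow> order list \<Rightarrow> real" where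
  "OPT K f n I0 c S = Inf {total_cost K f c n (length S) m | m. feasible K n I0 S m}"

definition run :: "policy \<Rightarrow> nat \<Rightarrow> (nat \<Rightarrow> nat \<Rightarrow> nat) \<Rightarrow> (nat \<Rightarrow> nat \<Rightarrow> real) \<Rightarrow> order list \<Rightarrow> nat \<Rightarrow> decision" where
  "run pol n I0 c S = (\<lambda>t. pol n I0 c (take (Suc t) S))"

definition pol_cost :: "nat \<Rightarrow> (nat \<Rightarrow> real) \<Rightarrow> policy \<Rightarrow> nat \<Rightarrow> (nat \<Rightarrow> nat \<Rightarrow> nat) \<Rightarrow> (nat \<Rightarrow> nat \<Rightarrow> real) \<Rightarrow> order list \<Rightarrow> real" where
  "pol_cost K f pol n I0 c S = total_cost K f c n (length S) (run pol n I0 c S)"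

text \<open>Deterministic policies are the case of a one-point space.\<close>
definition randomized_policy :: "nat \<Rightarrow> (nat \<Rightarrow> real) \<Rightarrow> 'w measure \<Rightarrow> ('w \<Rightarrow> policy) \<Rightarrow> bool" where
  "randomized_policy K f M pol \<longleftrightarrow>
     prob_space M \<and>
     (\<forall>\<omega>\<in>space M. \<forall>n I0 c S. valid_inst K n I0 c S \<longrightarrow> feasible K n I0 S (run (pol \<omega>) n I0 c S)) \<and>
     (\<forall>n I0 c S. valid_inst K n I0 c S \<longrightarrow>
        (\<lambda>\<omega>. pol_cost K f (pol \<omega>) n I0 c S) \<in> borel_measurable M)"

definition ALG :: "nat \<Rightarrow> (nat \<Rightarrow> real) \<Rightarrow> 'w measure \<Rightarrow> ('w \<Rightarrow> policy) \<Rightarrow> nat \<Rightarrow> (nat \<Rightarrow> nat \<Rightarrow> nat) \<Rightarrow> (nat \<Rightarrow> nat \<Rightarrow> real) \<Rightarrow> order list \<Rightarrow> real" where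
  "ALG K f M pol n I0 c S = (\<integral>\<omega>. pol_cost K f (pol \<omega>) n I0 c S \<partial>M)"

definition ratio :: "real \<Rightarrow> real \<Rightarrow> ereal" where
  "ratio a b = (if b = 0 then (if a = 0 then 0 else \<infinity>) else ereal (a / b))"

definition R_inv :: "nat \<Rightarrow> (nat \<Rightarrow> real) \<Rightarrow> 'w measure \<Rightarrow> ('w \<Rightarrow> policy) \<Rightarrow> ereal" where
  "R_inv K f M pol =
     (SUP x \<in> {(n, I0, c, S). valid_inst K n I0 c S}.
        (case x of (n, I0, c, S) \<Rightarrow> ratio (ALG K f M pol n I0 c S) (OPT K f n I0 c S)))"

end

theory Submission
  imports Defs
begin

(* Yao-type adversary. Fix an FDC ks, a scale L and nslots = L^2. Item 0 is ordered in every
   period and stocked only at ks, so every period costs at least f ks. In each of the first L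
   periods a fresh block of items is ordered; an item of group g <> ks is stocked once at ks,
   where it is free, and at its own facility g (the RDC for g = 0), where it costs f g / L.
   Then one block j is ordered again, slot by slot, over nslots periods: an item of block j
   that was taken from ks can now only be served at cost f g. The first L periods look the
   same for all j, so averaging over j shows that every randomized policy pays
   L f ks + L^2 (f 0 + ... + f K) in expectation on some instance, whereas knowing j one serves
   block j from the facilities g and everything else from ks for (L + L^2) f ks + O(L).
   Let L grow and take ks cheapest. *)

lemma feasible_demand:
  assumes "feasible K n I0 S m" "t < length S" "i < n"
  shows "(\<Sum>k\<le>K. m t k i) = (S ! t) i"
  using assms by (simp add: feasible_def)

lemma feasible_cumulative_le_stock:
  assumes "feasible K n I0 S m" "t < length S" "i < n" "k \<in> {1..K}"
  shows "(\<Sum>\<tau>\<le>t. m \<tau> k i) \<le> I0 k i"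
  using assms by (simp add: feasible_def)

lemma feasible_le_stock:
  assumes "feasible K n I0 S m" "t < length S" "i < n" "k \<in> {1..K}"
  shows "m t k i \<le> I0 k i"
proof -
  have "m t k i \<le> (\<Sum>\<tau>\<le>t. m \<tau> k i)" by (rule member_le_sum) auto
  also have "\<dots> \<le> I0 k i" by (rule feasible_cumulative_le_stock[OF assms])
  finally show ?thesis .
qed

lemma feasible_le_demand:
  assumes "feasible K n I0 S m" "t < length S" "i < n" "k \<le> K"
  shows "m t k i \<le> (S ! t) i"
proof -
  have "m t k i \<le> (\<Sum>k\<le>K. m t k i)" using assms(4) by (intro member_le_sum) auto
  then show ?thesis using feasible_demand[OF assms(1-3)] by simp
qed

definition used :: "nat \<Rightarrow> decision \<Rightarrow> nat \<Rightarrow> bool" where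
  "used n d k \<longleftrightarrow> 0 < (\<Sum>i<n. d k i)"

definition item_cost :: "nat \<Rightarrow> (nat \<Rightarrow> nat \<Rightarrow> real) \<Rightarrow> decision \<Rightarrow> nat \<Rightarrow> real" where
  "item_cost K c d i = (\<Sum>k\<le>K. c k i * real (d k i))"

definition period_cost ::
    "nat \<Rightarrow> (nat \<Rightarrow> real) \<Rightarrow> (nat \<Rightarrow> nat \<Rightarrow> real) \<Rightarrow> nat \<Rightarrow> decision \<Rightarrow> real" where
  "period_cost K f c n d =
     (\<Sum>k\<le>K. if used n d k then f k else 0) + (\<Sum>i<n. item_cost K c d i)"

lemma total_cost_eq_sum_period_cost:
  "total_cost K f c n T m = (\<Sum>t<T. period_cost K f c n (m t))"
  unfolding total_cost_def period_cost_def item_cost_def used_def sum.distrib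
  by (simp add: sum.swap[of _ "{..<n}"] if_distrib[of "(*) _"] cong: if_cong)

lemma used_if_ships:
  assumes "i < n" "0 < d k i"
  shows "used n d k"
proof -
  have "d k i \<le> (\<Sum>i<n. d k i)" using assms(1) by (intro member_le_sum) auto
  then show ?thesis using assms(2) by (simp add: used_def)
qed

lemma item_cost_nonneg:
  assumes "\<forall>k\<le>K. 0 \<le> c k i"
  shows "0 \<le> item_cost K c d i"
  unfolding item_cost_def using assms by (intro sum_nonneg) simp

lemma sum_le_item_cost:
  assumes "\<forall>k\<le>K. 0 \<le> c k i" "B \<subseteq> {..K}"
  shows "(\<Sum>k\<in>B. c k i * real (d k i)) \<le> item_cost K c d i"
  unfolding item_cost_def using assms by (intro sum_mono2) auto

lemma period_cost_ge:
  assumes f: "\<forall>k\<le>K. 0 \<le> f k" and c: "\<forall>k\<le>K. \<forall>i<n. 0 \<le> c k i"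
    and A: "A \<subseteq> {..K}" and I: "I \<subseteq> {..<n}"
  shows "(\<Sum>k\<in>A. if used n d k then f k else 0) + (\<Sum>i\<in>I. item_cost K c d i)
           \<le> period_cost K f c n d"
  unfolding period_cost_def
proof (rule add_mono)
  show "(\<Sum>k\<in>A. if used n d k then f k else 0) \<le> (\<Sum>k\<le>K. if used n d k then f k else 0)"
    using A f by (intro sum_mono2) auto
  show "(\<Sum>i\<in>I. item_cost K c d i) \<le> (\<Sum>i<n. item_cost K c d i)"
    using I c by (intro sum_mono2 item_cost_nonneg) auto
qed

lemma period_cost_nonneg:
  assumes "\<forall>k\<le>K. 0 \<le> f k" "\<forall>k\<le>K. \<forall>i<n. 0 \<le> c k i"
  shows "0 \<le> period_cost K f c n d"
  using period_cost_ge[OF assms, of "{}" "{}" d] by simp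

lemma total_cost_nonneg:
  assumes "\<forall>k\<le>K. 0 \<le> f k" "\<forall>k\<le>K. \<forall>i<n. 0 \<le> c k i"
  shows "0 \<le> total_cost K f c n T m"
  unfolding total_cost_eq_sum_period_cost by (intro sum_nonneg period_cost_nonneg[OF assms])

lemma total_cost_le_of_feasible:
  assumes f: "\<forall>k\<le>K. 0 \<le> f k" and valid: "valid_inst K n I0 c S"
    and feas: "feasible K n I0 S m"
  shows "total_cost K f c n (length S) m
           \<le> (\<Sum>t<length S. \<Sum>k\<le>K. f k + (\<Sum>i<n. c k i * real ((S ! t) i)))"
  unfolding total_cost_def
proof (intro sum_mono add_mono)
  fix t k i assume "t \<in> {..<length S}" "k \<in> {..K}" "i \<in> {..<n}"
  then show "c k i * real (m t k i) \<le> c k i * real ((S ! t) i)"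
    using valid feasible_le_demand[OF feas] by (intro mult_left_mono) (auto simp: valid_inst_def)
qed (use f in auto)

lemma integrable_pol_cost:
  assumes pol: "randomized_policy K f M pol" and f: "\<forall>k\<le>K. 0 \<le> f k"
    and valid: "valid_inst K n I0 c S"
  shows "integrable M (\<lambda>\<omega>. pol_cost K f (pol \<omega>) n I0 c S)"
proof -
  interpret prob_space M using pol by (simp add: randomized_policy_def)
  have c: "\<forall>k\<le>K. \<forall>i<n. 0 \<le> c k i" using valid by (simp add: valid_inst_def)
  show ?thesis
  proof (rule integrable_const_bound)
    show "AE \<omega> in M. norm (pol_cost K f (pol \<omega>) n I0 c S)
            \<le> (\<Sum>t<length S. \<Sum>k\<le>K. f k + (\<Sum>i<n. c k i * real ((S ! t) i)))"
      using pol valid total_cost_nonneg[OF f c] total_cost_le_of_feasible[OF f valid]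
      by (intro AE_I2) (simp add: randomized_policy_def pol_cost_def)
    show "(\<lambda>\<omega>. pol_cost K f (pol \<omega>) n I0 c S) \<in> borel_measurable M"
      using pol valid by (simp add: randomized_policy_def)
  qed
qed

lemma OPT_le:
  assumes "\<forall>k\<le>K. 0 \<le> f k" "valid_inst K n I0 c S" "feasible K n I0 S m"
  shows "OPT K f n I0 c S \<le> total_cost K f c n (length S) m"
  unfolding OPT_def using assms total_cost_nonneg[OF assms(1)]
  by (intro cInf_lower bdd_belowI[of _ 0]) (auto simp: valid_inst_def)

lemma OPT_nonneg:
  assumes "\<forall>k\<le>K. 0 \<le> f k" "valid_inst K n I0 c S" "feasible K n I0 S m"
  shows "0 \<le> OPT K f n I0 c S"
  unfolding OPT_def using assms total_cost_nonneg[OF assms(1)]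
  by (intro cInf_greatest) (auto simp: valid_inst_def)

lemma run_eq_if_take_eq:
  "take (Suc t) S = take (Suc t) S' \<Longrightarrow> run p n I0 c S t = run p n I0 c S' t"
  by (simp add: run_def)

lemma ratio_ge_divide:
  assumes "0 \<le> a" "a \<le> A" "0 \<le> B" "B \<le> b"
  shows "ereal (a / b) \<le> ratio A B"
proof (cases "B = 0")
  case True
  then show ?thesis using assms by (auto simp: ratio_def)
next
  case False
  then have "a / b \<le> a / B" using assms by (intro divide_left_mono) auto
  also have "\<dots> \<le> A / B" using assms False by (intro divide_right_mono) auto
  finally show ?thesis using False by (simp add: ratio_def)
qed

lemma R_inv_ge_ratio:
  "valid_inst K n I0 c S \<Longrightarrow> ratio (ALG K f M pol n I0 c S) (OPT K f n I0 c S) \<le> R_inv K f M pol"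
  unfolding R_inv_def by (rule SUP_upper2[of "(n, I0, c, S)"]) auto

lemma (in prob_space) exists_expectation_ge_average:
  assumes "finite J" "J \<noteq> {}" "\<And>j. j \<in> J \<Longrightarrow> integrable M (X j)"
    and "\<And>\<omega>. \<omega> \<in> space M \<Longrightarrow> real (card J) * a \<le> (\<Sum>j\<in>J. X j \<omega>)"
  shows "\<exists>j\<in>J. a \<le> expectation (X j)"
proof (rule ccontr)
  assume "\<not> ?thesis"
  then have "(\<Sum>j\<in>J. expectation (X j)) < (\<Sum>j\<in>J. a)"
    using assms(1,2) by (intro sum_strict_mono) auto
  also have "\<dots> = expectation (\<lambda>\<omega>. real (card J) * a)" by (simp add: prob_space)
  also have "\<dots> \<le> expectation (\<lambda>\<omega>. \<Sum>j\<in>J. X j \<omega>)"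
    using assms by (intro integral_mono_AE AE_I2) auto
  also have "\<dots> = (\<Sum>j\<in>J. expectation (X j))"
    using assms(3) by (rule Bochner_Integration.integral_sum)
  finally show False by simp
qed

lemma hard_ratio_tendsto:
  fixes a F c :: real
  assumes "0 < a"
  shows "(\<lambda>L. (real L * a + real L ^ 2 * F) / ((real L + real L ^ 2) * a + (1 + c * real L) * F))
           \<longlonglongrightarrow> F / a"
proof -
  let ?g = "\<lambda>x::real. (a * x + F) / ((x + 1) * a + (x\<^sup>2 + c * x) * F)"
  have "(\<lambda>L. ?g (inverse (real L))) \<longlonglongrightarrow> ?g 0"
    using assms by (intro tendsto_intros lim_inverse_n) auto
  then have lim: "(\<lambda>L. ?g (inverse (real L))) \<longlonglongrightarrow> F / a" by simp
  have eq: "?g (inverse (real L))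
      = (real L * a + real L ^ 2 * F) / ((real L + real L ^ 2) * a + (1 + c * real L) * F)"
    if "1 \<le> L" for L
  proof -
    have L: "real L \<noteq> 0" using that by simp
    have "a * inverse (real L) + F = (real L * a + real L ^ 2 * F) / real L ^ 2"
      and "(inverse (real L) + 1) * a + ((inverse (real L))\<^sup>2 + c * inverse (real L)) * F
            = ((real L + real L ^ 2) * a + (1 + c * real L) * F) / real L ^ 2"
      using L by (simp_all add: field_simps power2_eq_square)
    then show ?thesis using L by simp
  qed
  show ?thesis
  proof (rule Lim_transform_eventually[OF lim])
    show "\<forall>\<^sub>F L in sequentially. ?g (inverse (real L))
      = (real L * a + real L ^ 2 * F) / ((real L + real L ^ 2) * a + (1 + c * real L) * F)"
      using eq eventually_sequentially by blast
  qed
qed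

lemma sum_le_single_support:
  fixes h :: "'a \<Rightarrow> nat"
  assumes "finite A" "\<And>x. x \<noteq> x0 \<Longrightarrow> h x = 0"
  shows "sum h A \<le> h x0"
proof -
  have "sum h A = (\<Sum>x\<in>A. if x = x0 then h x0 else 0)"
    using assms(2) by (intro sum.cong) auto
  also have "\<dots> \<le> h x0" using assms(1) by (simp add: sum.delta)
  finally show ?thesis .
qed

locale hard_instance =
  fixes K :: nat and f :: "nat \<Rightarrow> real" and ks L :: nat
  assumes ks: "ks \<in> {1..K}" and L_pos: "0 < L" and f_nonneg: "\<forall>k\<le>K. 0 \<le> f k"
begin

definition nslots :: nat where "nslots = L * L"
definition nitems :: nat where "nitems = Suc (Suc K * nslots * L)"
definition F :: real where "F = (\<Sum>k\<le>K. f k)"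
definition others :: "nat set" where "others = {..K} - {ks}"

definition item :: "nat \<Rightarrow> nat \<Rightarrow> nat \<Rightarrow> nat" where
  "item g t s = Suc (g + Suc K * (s + nslots * t))"
definition group :: "nat \<Rightarrow> nat" where "group i = (i - 1) mod Suc K"
definition slot :: "nat \<Rightarrow> nat" where "slot i = (i - 1) div Suc K mod nslots"
definition block :: "nat \<Rightarrow> nat" where "block i = (i - 1) div Suc K div nslots"

lemma nslots_pos: "0 < nslots"
  using L_pos by (simp add: nslots_def)

lemma ks_le: "ks \<le> K" and ks_pos: "1 \<le> ks"
  using ks by auto

lemma item_nonzero [simp]: "item g t s \<noteq> 0"
  by (simp add: item_def)

lemma group_item [simp]: "g \<le> K \<Longrightarrow> group (item g t s) = g"
  by (simp add: group_def item_def del: mult_Suc)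

lemma slot_item [simp]: "g \<le> K \<Longrightarrow> s < nslots \<Longrightarrow> slot (item g t s) = s"
  using nslots_pos by (simp add: slot_def item_def del: mult_Suc)

lemma block_item [simp]: "g \<le> K \<Longrightarrow> s < nslots \<Longrightarrow> block (item g t s) = t"
  by (simp add: block_def item_def del: mult_Suc)

lemma item_group_block_slot: "i \<noteq> 0 \<Longrightarrow> item (group i) (block i) (slot i) = i"
  by (simp add: item_def group_def slot_def block_def del: mult_Suc)

lemma item_eq_iff:
  assumes "g \<le> K" "s < nslots" "g' \<le> K" "s' < nslots"
  shows "item g t s = item g' t' s' \<longleftrightarrow> g = g' \<and> t = t' \<and> s = s'"
  using assms by (metis group_item slot_item block_item)

lemma item_less_nitems:
  assumes "g \<le> K" "t < L" "s < nslots"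
  shows "item g t s < nitems"
proof -
  have "s + nslots * t + 1 \<le> nslots * Suc t" using assms(3) by simp
  also have "\<dots> \<le> nslots * L" using assms(2) by (intro mult_le_mono2) simp
  finally
  have "Suc K * (s + nslots * t + 1) \<le> Suc K * nslots * L"
    by (metis mult.assoc mult_le_mono2)
  moreover have "g + Suc K * (s + nslots * t) < Suc K * (s + nslots * t + 1)" using assms(1) by simp
  ultimately show ?thesis by (simp add: item_def nitems_def del: mult_Suc)
qed

definition stock :: "nat \<Rightarrow> nat \<Rightarrow> nat" where
  "stock k i =
    (if k \<in> {1..K} \<and> i < nitems then
       if i = 0 then (if k = ks then L + nslots else 0)
       else if group i \<noteq> ks \<and> (k = ks \<or> k = group i) then 1 else 0
     else 0)"

definition cost :: "nat \<Rightarrow> nat \<Rightarrow> real" where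
  "cost k i =
    (if k \<le> K \<and> i < nitems then
       if i = 0 then (if k = 0 then F else 0)
       else if group i = ks then 0
       else if k = group i then f k / L
       else if k = 0 then F else 0
     else 0)"

definition demand :: "nat \<Rightarrow> nat \<Rightarrow> order" where
  "demand j t i =
    (if i = 0 then 1
     else if i < nitems \<and> group i \<noteq> ks \<and>
             (if t < L then block i = t else block i = j \<and> slot i = t - L) then 1
     else 0)"

definition orders :: "nat \<Rightarrow> order list" where
  "orders j = map (demand j) [0..<L + nslots]"

lemma length_orders [simp]: "length (orders j) = L + nslots"
  by (simp add: orders_def)

lemma nth_orders [simp]: "t < L + nslots \<Longrightarrow> orders j ! t = demand j t"
  by (simp add: orders_def del: upt_Suc)

lemma nitems_pos: "0 < nitems"
  by (simp add: nitems_def)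

lemma f_le_F: "k \<le> K \<Longrightarrow> f k \<le> F"
  unfolding F_def using f_nonneg by (intro member_le_sum) auto

lemma f_div_L_le: "k \<le> K \<Longrightarrow> f k / L \<le> f k"
  using f_nonneg L_pos by (auto simp: divide_le_eq mult_le_cancel_left1 not_less)

lemma F_nonneg: "0 \<le> F"
  unfolding F_def using f_nonneg by (intro sum_nonneg) auto

lemma sum_others: "(\<Sum>g\<in>others. f g) = F - f ks"
  unfolding F_def others_def using ks_le by (simp add: sum_diff1)

lemma cost_nonneg: "0 \<le> cost k i"
  using F_nonneg f_nonneg L_pos by (simp add: cost_def)

lemma cost_ks [simp]: "cost ks i = 0"
  using ks_pos by (simp add: cost_def)

lemma item_cost_cost_nonneg: "0 \<le> item_cost K cost d i"
  using cost_nonneg by (intro item_cost_nonneg) simp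

lemma sum_cost_le_item_cost:
  "B \<subseteq> {..K} \<Longrightarrow> (\<Sum>k\<in>B. cost k i * real (d k i)) \<le> item_cost K cost d i"
  using cost_nonneg by (intro sum_le_item_cost) auto

lemma valid_orders: "valid_inst K nitems stock cost (orders j)"
  unfolding valid_inst_def using nitems_pos
  by (intro conjI allI impI ballI cost_nonneg) (auto simp: stock_def cost_def orders_def demand_def)

abbreviation fixed_cost :: "decision \<Rightarrow> nat \<Rightarrow> real" where
  "fixed_cost d k \<equiv> if used nitems d k then f k else 0"

lemma feasible_demand_from:
  assumes feas: "feasible K nitems stock (orders j) m" and t: "t < L + nslots" and i: "i < nitems"
    and A: "A \<subseteq> {..K}" "0 \<in> A"
    and stock: "\<And>k. k \<in> {1..K} \<Longrightarrow> k \<notin> A \<Longrightarrow> stock k i = 0"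
  shows "(\<Sum>k\<in>A. m t k i) = demand j t i"
proof -
  have "m t k i = 0" if "k \<in> {..K} - A" for k
  proof -
    have "k \<in> {1..K}" using that A(2) by (cases k) auto
    then show ?thesis using feasible_le_stock[OF feas _ i] stock t that by fastforce
  qed
  then have "(\<Sum>k\<le>K. m t k i) = (\<Sum>k\<in>A. m t k i)"
    using A by (intro sum.mono_neutral_right) auto
  then show ?thesis using feasible_demand[OF feas _ i] t by simp
qed

lemma filler_cost:
  assumes feas: "feasible K nitems stock (orders j) m" and t: "t < L + nslots"
  shows "f ks \<le> fixed_cost (m t) ks + item_cost K cost (m t) 0"
proof (cases "0 < m t ks 0")
  case True
  then have "used nitems (m t) ks" by (rule used_if_ships[OF nitems_pos])
  then show ?thesis using item_cost_cost_nonneg by auto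
next
  case False
  have "(\<Sum>k\<in>{0, ks}. m t k 0) = demand j t 0"
    by (rule feasible_demand_from[OF feas t nitems_pos]) (auto simp: ks_le stock_def)
  then have "m t 0 0 = 1" using False ks_pos by (simp add: demand_def)
  moreover have "cost 0 0 = F" using nitems_pos by (simp add: cost_def)
  ultimately have "F \<le> item_cost K cost (m t) 0"
    using sum_cost_le_item_cost[of "{0}" 0 "m t"] by simp
  then show ?thesis using f_le_F[OF ks_le] F_nonneg by auto
qed

lemma item_of_others:
  assumes "g \<in> others" "t < L" "s < nslots"
  shows "item g t s < nitems" "group (item g t s) = g" "g \<le> K" "g \<noteq> ks"
  using assms item_less_nitems by (auto simp: others_def)

lemma bulk_item_cost:
  assumes feas: "feasible K nitems stock (orders j) m" and t: "t < L"
    and g: "g \<in> others" and s: "s < nslots"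
  shows "f g / L * (1 - real (m t ks (item g t s))) \<le> item_cost K cost (m t) (item g t s)"
proof -
  define i where "i = item g t s"
  note i = item_of_others[OF g t s, folded i_def]
  have "i \<noteq> 0" by (simp add: i_def)
  have "(\<Sum>k\<in>insert ks {0, g}. m t k i) = demand j t i"
    using i ks_le t by (intro feasible_demand_from[OF feas]) (auto simp: stock_def)
  also have "\<dots> = 1" using i t s by (simp add: demand_def i_def)
  finally have "real (m t ks i) + (\<Sum>k\<in>{0, g}. real (m t k i)) = 1"
    using i ks_pos by (simp flip: of_nat_sum)
  then have "f g / L * (1 - real (m t ks i)) = f g / L * (\<Sum>k\<in>{0, g}. real (m t k i))"
    by simp
  also have "\<dots> = (\<Sum>k\<in>{0, g}. f g / L * real (m t k i))"
    by (rule sum_distrib_left)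
  also have "\<dots> \<le> (\<Sum>k\<in>{0, g}. cost k i * real (m t k i))"
  proof (rule sum_mono)
    fix k assume "k \<in> {0, g}"
    then have "f g / L \<le> cost k i"
      using i \<open>i \<noteq> 0\<close> f_div_L_le[of g] f_le_F[of g] by (auto simp: cost_def)
    then show "f g / L * real (m t k i) \<le> cost k i * real (m t k i)"
      by (rule mult_right_mono) simp
  qed
  also have "\<dots> \<le> item_cost K cost (m t) i"
    using i by (intro sum_cost_le_item_cost) auto
  finally show ?thesis by (simp add: i_def)
qed

lemma ks_ships_item_once:
  assumes feas: "feasible K nitems stock (orders j) m" and j: "j < L"
    and g: "g \<in> others" and s: "s < nslots"
  shows "m j ks (item g j s) + m (L + s) ks (item g j s) \<le> 1"
proof -
  define i where "i = item g j s"
  note i = item_of_others[OF g j s, folded i_def]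
  have "m j ks i + m (L + s) ks i = (\<Sum>\<tau>\<in>{j, L + s}. m \<tau> ks i)" using j by simp
  also have "\<dots> \<le> (\<Sum>\<tau>\<le>L + s. m \<tau> ks i)" using j by (intro sum_mono2) auto
  also have "\<dots> \<le> stock ks i" using ks s by (intro feasible_cumulative_le_stock[OF feas]) (auto simp: i)
  also have "\<dots> = 1" using i ks by (simp add: stock_def i_def)
  finally show ?thesis by (simp add: i_def)
qed

lemma trap_reorder_cost:
  assumes feas: "feasible K nitems stock (orders j) m" and j: "j < L"
    and g: "g \<in> others" and s: "s < nslots" and not_ks: "m (L + s) ks (item g j s) = 0"
  shows "f g \<le> fixed_cost (m (L + s)) g + item_cost K cost (m (L + s)) (item g j s)"
proof -
  define i where "i = item g j s"
  define t where "t = L + s"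
  note i = item_of_others[OF g j s, folded i_def]
  have "i \<noteq> 0" by (simp add: i_def)
  have t: "t < L + nslots" using s by (simp add: t_def)
  have "(\<Sum>k\<in>insert ks {0, g}. m t k i) = demand j t i"
    using i t ks_le by (intro feasible_demand_from[OF feas]) (auto simp: stock_def)
  also have "\<dots> = 1" using i j s by (simp add: demand_def i_def t_def)
  finally have sum1: "(\<Sum>k\<in>{0, g}. m t k i) = 1"
    using i ks_pos not_ks by (simp add: i_def t_def)
  show ?thesis
  proof (cases "0 < m t g i")
    case True
    then have "used nitems (m t) g" by (rule used_if_ships[OF i(1)])
    then show ?thesis using item_cost_cost_nonneg by (simp add: i_def t_def)
  next
    case False
    then have "g \<noteq> 0" "m t 0 i = 1" using sum1 by (cases "g = 0"; simp)+
    moreover have "cost 0 i * real (m t 0 i) \<le> item_cost K cost (m t) i"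
      using sum_cost_le_item_cost[of "{0}" i "m t"] by simp
    ultimately have "F \<le> item_cost K cost (m t) i"
      using i \<open>i \<noteq> 0\<close> by (simp add: cost_def)
    then show ?thesis using f_le_F[OF i(3)] f_nonneg i(3) by (auto simp: i_def t_def)
  qed
qed

lemma trap_item_cost:
  assumes feas: "feasible K nitems stock (orders j) m" and j: "j < L"
    and g: "g \<in> others" and s: "s < nslots"
  shows "f g * real (m j ks (item g j s))
           \<le> fixed_cost (m (L + s)) g + item_cost K cost (m (L + s)) (item g j s)"
proof (cases "m j ks (item g j s) = 0")
  case True
  then show ?thesis using f_nonneg item_cost_cost_nonneg item_of_others(3)[OF g j s] by auto
next
  case False
  with ks_ships_item_once[OF assms]
  have "m j ks (item g j s) = 1" "m (L + s) ks (item g j s) = 0" by auto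
  then show ?thesis using trap_reorder_cost[OF assms] by simp
qed

lemma bulk_period_cost:
  assumes feas: "feasible K nitems stock (orders j) m" and t: "t < L"
  shows "f ks + (\<Sum>g\<in>others. \<Sum>s<nslots. f g / L * (1 - real (m t ks (item g t s))))
           \<le> period_cost K f cost nitems (m t)"
proof -
  let ?item = "\<lambda>(g, s). item g t s"
  have inj: "inj_on ?item (others \<times> {..<nslots})"
    by (rule inj_onI) (auto simp: others_def item_eq_iff)
  have range: "?item ` (others \<times> {..<nslots}) \<subseteq> {..<nitems} - {0}"
    using item_of_others(1) t by auto
  have "f ks + (\<Sum>g\<in>others. \<Sum>s<nslots. f g / L * (1 - real (m t ks (item g t s))))
      \<le> fixed_cost (m t) ks + item_cost K cost (m t) 0
        + (\<Sum>(g, s)\<in>others \<times> {..<nslots}. item_cost K cost (m t) (item g t s))"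
    unfolding sum.cartesian_product[symmetric] using t
    by (intro add_mono filler_cost[OF feas] sum_mono bulk_item_cost[OF feas]) auto
  also have "\<dots> = (\<Sum>k\<in>{ks}. fixed_cost (m t) k)
        + (\<Sum>i\<in>insert 0 (?item ` (others \<times> {..<nslots})). item_cost K cost (m t) i)"
  proof -
    have "(\<Sum>i\<in>?item ` (others \<times> {..<nslots}). item_cost K cost (m t) i)
        = (\<Sum>(g, s)\<in>others \<times> {..<nslots}. item_cost K cost (m t) (item g t s))"
      by (rule sum.reindex_cong[OF inj]) auto
    moreover have "finite (?item ` (others \<times> {..<nslots}))" "0 \<notin> ?item ` (others \<times> {..<nslots})"
      using range by (auto intro: finite_subset)
    ultimately show ?thesis by simp
  qed
  also have "\<dots> \<le> period_cost K f cost nitems (m t)"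
    using range nitems_pos ks_le by (intro period_cost_ge f_nonneg allI impI cost_nonneg) auto
  finally show ?thesis .
qed

lemma trap_period_cost:
  assumes feas: "feasible K nitems stock (orders j) m" and j: "j < L" and s: "s < nslots"
  shows "f ks + (\<Sum>g\<in>others. f g * real (m j ks (item g j s)))
           \<le> period_cost K f cost nitems (m (L + s))"
proof -
  let ?item = "\<lambda>g. item g j s"
  have inj: "inj_on ?item others"
    using s by (intro inj_onI) (auto simp: others_def item_eq_iff)
  have range: "?item ` others \<subseteq> {..<nitems} - {0}"
    using item_of_others(1) j s by auto
  have "f ks + (\<Sum>g\<in>others. f g * real (m j ks (item g j s)))
      \<le> fixed_cost (m (L + s)) ks + item_cost K cost (m (L + s)) 0
        + (\<Sum>g\<in>others. fixed_cost (m (L + s)) g + item_cost K cost (m (L + s)) (item g j s))"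
    using j s by (intro add_mono filler_cost[OF feas] sum_mono trap_item_cost[OF feas]) auto
  also have "\<dots> = (\<Sum>k\<in>insert ks others. fixed_cost (m (L + s)) k)
        + (\<Sum>i\<in>insert 0 (?item ` others). item_cost K cost (m (L + s)) i)"
  proof -
    have "(\<Sum>i\<in>?item ` others. item_cost K cost (m (L + s)) i)
        = (\<Sum>g\<in>others. item_cost K cost (m (L + s)) (item g j s))"
      by (rule sum.reindex_cong[OF inj]) auto
    moreover have "finite others" "ks \<notin> others" "0 \<notin> ?item ` others"
      using range by (auto simp: others_def)
    ultimately show ?thesis by (simp add: sum.distrib)
  qed
  also have "\<dots> \<le> period_cost K f cost nitems (m (L + s))"
    using range nitems_pos ks_le
    by (intro period_cost_ge f_nonneg allI impI cost_nonneg) (auto simp: others_def)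
  finally show ?thesis .
qed

text \<open>Bulk periods pay at least f g / L for each of their items not taken from ks, and
  reorder periods pay f g for each item of block j that was.\<close>

definition alg_lower :: "(nat \<Rightarrow> decision) \<Rightarrow> nat \<Rightarrow> real" where
  "alg_lower m j = real (L + nslots) * f ks
     + (\<Sum>t<L. \<Sum>g\<in>others. \<Sum>s<nslots. f g / L * (1 - real (m t ks (item g t s))))
     + (\<Sum>s<nslots. \<Sum>g\<in>others. f g * real (m j ks (item g j s)))"

lemma alg_lower_le_total_cost:
  assumes feas: "feasible K nitems stock (orders j) m" and j: "j < L"
  shows "alg_lower m j \<le> total_cost K f cost nitems (L + nslots) m"
proof -
  have split: "(\<Sum>t<L + N. h t) = (\<Sum>t<L. h t) + (\<Sum>s<N. h (L + s))" for N and h :: "nat \<Rightarrow> real"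
    by (induction N) auto
  have "alg_lower m j
      = (\<Sum>t<L. f ks + (\<Sum>g\<in>others. \<Sum>s<nslots. f g / L * (1 - real (m t ks (item g t s)))))
        + (\<Sum>s<nslots. f ks + (\<Sum>g\<in>others. f g * real (m j ks (item g j s))))"
    by (simp add: alg_lower_def sum.distrib algebra_simps)
  also have "\<dots> \<le> (\<Sum>t<L. period_cost K f cost nitems (m t))
        + (\<Sum>s<nslots. period_cost K f cost nitems (m (L + s)))"
    using j by (intro add_mono sum_mono bulk_period_cost[OF feas] trap_period_cost[OF feas]) auto
  also have "\<dots> = total_cost K f cost nitems (L + nslots) m"
    by (simp add: total_cost_eq_sum_period_cost split)
  finally show ?thesis .
qed

lemma alg_lower_cong:
  "j < L \<Longrightarrow> (\<And>t. t < L \<Longrightarrow> m t = m' t) \<Longrightarrow> alg_lower m j = alg_lower m' j"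
  by (simp add: alg_lower_def)

lemma sum_alg_lower: "(\<Sum>j<L. alg_lower m j) = real L * (real L * f ks + real nslots * F)"
proof -
  define x where "x t g s = real (m t ks (item g t s))" for t g s
  define T where "T = (\<Sum>t<L. \<Sum>g\<in>others. \<Sum>s<nslots. f g / L * (1 - x t g s))"
  have swap: "(\<Sum>s<nslots. \<Sum>g\<in>others. f g * x t g s)
      = (\<Sum>g\<in>others. \<Sum>s<nslots. f g * x t g s)" for t
    by (rule sum.swap)
  have "(\<Sum>j<L. alg_lower m j)
      = real L * (real (L + nslots) * f ks)
        + (real L * T + (\<Sum>t<L. \<Sum>g\<in>others. \<Sum>s<nslots. f g * x t g s))"
    by (simp add: alg_lower_def x_def T_def sum.distrib distrib_left swap[unfolded x_def])
  also have "real L * T + (\<Sum>t<L. \<Sum>g\<in>others. \<Sum>s<nslots. f g * x t g s)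
      = (\<Sum>t<L. \<Sum>g\<in>others. \<Sum>s<nslots. f g)"
    using L_pos by (simp add: T_def sum_distrib_left sum.distrib[symmetric] algebra_simps)
  also have "\<dots> = real L * (real nslots * (F - f ks))"
    by (simp add: sum_others flip: sum_distrib_left)
  finally show ?thesis by (simp add: algebra_simps)
qed

lemma run_bulk_independent:
  assumes t: "t < L"
  shows "run p nitems stock cost (orders j) t = run p nitems stock cost (orders 0) t"
proof (rule run_eq_if_take_eq)
  show "take (Suc t) (orders j) = take (Suc t) (orders 0)"
  proof (rule nth_equalityI)
    fix \<tau> assume "\<tau> < length (take (Suc t) (orders j))"
    then have "\<tau> < Suc t" "\<tau> < L" using t by simp_all
    moreover have "demand j \<tau> = demand 0 \<tau>" using \<open>\<tau> < L\<close> by (intro ext) (simp add: demand_def)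
    ultimately show "take (Suc t) (orders j) ! \<tau> = take (Suc t) (orders 0) ! \<tau>" by simp
  qed simp
qed

lemma exists_expensive_instance:
  assumes pol: "randomized_policy K f Mw pol"
  shows "\<exists>j<L. real L * f ks + real nslots * F \<le> ALG K f Mw pol nitems stock cost (orders j)"
proof -
  interpret prob_space Mw using pol by (simp add: randomized_policy_def)
  define X where "X j \<omega> = pol_cost K f (pol \<omega>) nitems stock cost (orders j)" for j \<omega>
  have "\<exists>j\<in>{..<L}. real L * f ks + real nslots * F \<le> expectation (X j)"
  proof (rule exists_expectation_ge_average)
    show "integrable Mw (X j)" for j
      unfolding X_def by (rule integrable_pol_cost[OF pol f_nonneg valid_orders])
    fix \<omega> assume \<omega>: "\<omega> \<in> space Mw"
    let ?m = "\<lambda>j. run (pol \<omega>) nitems stock cost (orders j)"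
    have feas: "feasible K nitems stock (orders j) (?m j)" for j
      using pol \<omega> valid_orders by (simp add: randomized_policy_def)
    have "real (card {..<L}) * (real L * f ks + real nslots * F) = (\<Sum>j<L. alg_lower (?m 0) j)"
      by (simp add: sum_alg_lower)
    also have "\<dots> = (\<Sum>j<L. alg_lower (?m j) j)"
    proof (intro sum.cong refl alg_lower_cong)
      fix j t assume "t < L"
      then show "?m 0 t = ?m j t" by (rule run_bulk_independent[symmetric])
    qed simp
    also have "\<dots> \<le> (\<Sum>j<L. X j \<omega>)"
      unfolding X_def pol_cost_def using alg_lower_le_total_cost[OF feas] by (intro sum_mono) simp
    finally show "real (card {..<L}) * (real L * f ks + real nslots * F) \<le> (\<Sum>j<L. X j \<omega>)" .
  qed (use L_pos in auto)
  then show ?thesis unfolding ALG_def X_def by blast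
qed

definition source :: "nat \<Rightarrow> nat \<Rightarrow> nat \<Rightarrow> nat" where
  "source j t i = (if i \<noteq> 0 \<and> t = j then group i else ks)"

definition offline :: "nat \<Rightarrow> nat \<Rightarrow> decision" where
  "offline j t k i = (if k = source j t i then demand j t i else 0)"

lemma source_le: "source j t i \<le> K"
  using ks_le by (simp add: source_def group_def)

lemma offline_cumulative_le_stock:
  assumes t: "t < L + nslots" and i: "i < nitems" and k: "k \<in> {1..K}"
  shows "(\<Sum>\<tau>\<le>t. offline j \<tau> k i) \<le> stock k i"
proof (cases "i = 0")
  case True
  then have "(\<Sum>\<tau>\<le>t. offline j \<tau> k i) = (if k = ks then Suc t else 0)"
    by (simp add: offline_def source_def demand_def)
  also have "\<dots> \<le> stock k i" using True t k i by (simp add: stock_def)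
  finally show ?thesis .
next
  case False
  show ?thesis
  proof (cases "group i \<noteq> ks \<and> (k = ks \<or> k = group i)")
    case False
    with \<open>i \<noteq> 0\<close> have "offline j \<tau> k i = 0" for \<tau>
      by (auto simp: offline_def source_def demand_def)
    then show ?thesis by simp
  next
    case True
    define \<tau>0 where "\<tau>0 = (if k = group i then j else if block i = j then L + slot i else block i)"
    have "offline j \<tau> k i = 0" if "\<tau> \<noteq> \<tau>0" for \<tau>
      using that True \<open>i \<noteq> 0\<close> by (auto simp: offline_def source_def demand_def \<tau>0_def)
    then have "(\<Sum>\<tau>\<le>t. offline j \<tau> k i) \<le> offline j \<tau>0 k i"
      by (intro sum_le_single_support) auto
    also have "\<dots> \<le> 1" by (simp add: offline_def demand_def)
    also have "\<dots> = stock k i" using True \<open>i \<noteq> 0\<close> i k by (simp add: stock_def)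
    finally show ?thesis .
  qed
qed

lemma offline_feasible: "feasible K nitems stock (orders j) (offline j)"
  unfolding feasible_def
proof (intro allI impI conjI ballI)
  fix t i assume "t < length (orders j)" "i < nitems"
  then show "(\<Sum>k\<le>K. offline j t k i) = (orders j ! t) i"
    using source_le by (simp add: offline_def sum.delta)
next
  fix t i k assume "t < length (orders j)" "i < nitems" "k \<in> {1..K}"
  then show "(\<Sum>\<tau>\<le>t. offline j \<tau> k i) \<le> stock k i"
    by (intro offline_cumulative_le_stock) simp_all
qed

lemma offline_period_cost_other:
  assumes "t \<noteq> j"
  shows "period_cost K f cost nitems (offline j t) \<le> f ks"
proof -
  have zero: "offline j t k i = 0" if "k \<noteq> ks" for k i
    using assms that by (simp add: offline_def source_def)
  have "(\<Sum>k\<le>K. fixed_cost (offline j t) k) \<le> (\<Sum>k\<le>K. if k = ks then f ks else 0)"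
    using f_nonneg by (intro sum_mono) (auto simp: used_def zero)
  also have "\<dots> = f ks" using ks_le by simp
  moreover have "item_cost K cost (offline j t) i = 0" for i
  proof -
    have "cost k i * real (offline j t k i) = 0" for k by (cases "k = ks") (simp_all add: zero)
    then show ?thesis unfolding item_cost_def by (intro sum.neutral ballI)
  qed
  ultimately show ?thesis by (simp add: period_cost_def)
qed

definition block_items :: "nat \<Rightarrow> nat set" where
  "block_items j = (\<lambda>(g, s). item g j s) ` ({..K} \<times> {..<nslots})"

lemma card_block_items: "card (block_items j) \<le> Suc K * nslots"
proof -
  have "card (block_items j) \<le> card ({..K} \<times> {..<nslots})"
    unfolding block_items_def by (rule card_image_le) simp
  then show ?thesis by simp
qed

lemma offline_item_cost_at:
  assumes "i < nitems"
  shows "item_cost K cost (offline j j) i \<le> (if i \<in> block_items j then F / L else 0)"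
proof -
  have cost_eq: "item_cost K cost (offline j j) i = cost (source j j i) i * real (demand j j i)"
    using source_le
    by (simp add: item_cost_def offline_def if_distrib[of real] if_distrib[of "(*) _"]
        sum.delta' cong: if_cong)
  show ?thesis
  proof (cases "i \<noteq> 0 \<and> demand j j i \<noteq> 0")
    case True
    then have "group i \<noteq> ks" "block i = j" "demand j j i = 1"
      by (auto simp: demand_def split: if_splits)
    moreover have "i = item (group i) (block i) (slot i)"
      using True by (simp add: item_group_block_slot)
    then have "i \<in> block_items j" unfolding block_items_def using \<open>block i = j\<close> nslots_pos
      by (intro image_eqI[of _ _ "(group i, slot i)"]) (auto simp: group_def slot_def)
    ultimately show ?thesis
      using True assms cost_eq f_div_L_le[of "group i"] f_le_F[of "group i"]
      by (simp add: source_def cost_def group_def divide_right_mono)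
  next
    case False
    then show ?thesis using cost_eq F_nonneg by (auto simp: source_def)
  qed
qed

lemma offline_period_cost_at:
  "period_cost K f cost nitems (offline j j) \<le> F + real (Suc K) * real L * F"
proof -
  have "(\<Sum>k\<le>K. fixed_cost (offline j j) k) \<le> F"
    unfolding F_def using f_nonneg by (intro sum_mono) auto
  moreover have "(\<Sum>i<nitems. item_cost K cost (offline j j) i)
      \<le> (\<Sum>i<nitems. if i \<in> block_items j then F / L else 0)"
    using offline_item_cost_at by (intro sum_mono) simp
  moreover have "\<dots> = real (card ({..<nitems} \<inter> block_items j)) * (F / L)"
    by (simp flip: sum.inter_restrict)
  moreover have "card ({..<nitems} \<inter> block_items j) \<le> Suc K * nslots"
    using card_block_items[of j] card_mono[of "block_items j" "{..<nitems} \<inter> block_items j"]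
    by (auto simp: block_items_def)
  then have "real (card ({..<nitems} \<inter> block_items j)) \<le> real (Suc K * nslots)"
    by (rule of_nat_mono)
  then have "real (card ({..<nitems} \<inter> block_items j)) * (F / L) \<le> real (Suc K * nslots) * (F / L)"
    using F_nonneg by (intro mult_right_mono) simp_all
  moreover have "real (Suc K * nslots) * (F / L) = real (Suc K) * real L * F"
    using L_pos by (simp add: nslots_def field_simps)
  ultimately show ?thesis by (simp add: period_cost_def)
qed

lemma OPT_le_offline:
  assumes j: "j < L"
  shows "OPT K f nitems stock cost (orders j)
           \<le> real (L + nslots) * f ks + (1 + real (Suc K) * real L) * F"
proof -
  have "OPT K f nitems stock cost (orders j) \<le> total_cost K f cost nitems (L + nslots) (offline j)"
    using OPT_le[OF f_nonneg valid_orders offline_feasible] by simp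
  also have "\<dots> \<le> (\<Sum>t<L + nslots. f ks + (if t = j then F + real (Suc K) * real L * F else 0))"
    unfolding total_cost_eq_sum_period_cost
  proof (intro sum_mono)
    fix t show "period_cost K f cost nitems (offline j t)
                  \<le> f ks + (if t = j then F + real (Suc K) * real L * F else 0)"
    proof (cases "t = j")
      case True
      moreover have "0 \<le> f ks" using f_nonneg ks_le by simp
      ultimately show ?thesis using offline_period_cost_at[of j] by simp
    next
      case False
      then show ?thesis using offline_period_cost_other[of t j] by simp
    qed
  qed
  also have "\<dots> = real (L + nslots) * f ks + (1 + real (Suc K) * real L) * F"
    using j by (simp add: sum.distrib distrib_right)
  finally show ?thesis .
qed

lemma R_inv_ge_hard_ratio:
  assumes pol: "randomized_policy K f Mw pol"
  shows "ereal ((real L * f ks + real L ^ 2 * F)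
                / ((real L + real L ^ 2) * f ks + (1 + real (Suc K) * real L) * F))
           \<le> R_inv K f Mw pol"
proof -
  obtain j where j: "j < L"
    and alg: "real L * f ks + real nslots * F \<le> ALG K f Mw pol nitems stock cost (orders j)"
    using exists_expensive_instance[OF pol] by blast
  have "ereal ((real L * f ks + real nslots * F)
               / (real (L + nslots) * f ks + (1 + real (Suc K) * real L) * F))
        \<le> ratio (ALG K f Mw pol nitems stock cost (orders j)) (OPT K f nitems stock cost (orders j))"
    using alg OPT_le_offline[OF j] OPT_nonneg[OF f_nonneg valid_orders offline_feasible]
      f_nonneg ks_le F_nonneg
    by (intro ratio_ge_divide) auto
  also have "\<dots> \<le> R_inv K f Mw pol"
    by (rule R_inv_ge_ratio[OF valid_orders])
  finally show ?thesis by (simp add: nslots_def power2_eq_square)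
qed

end

theorem theorem4:
  fixes K :: nat and f :: "nat \<Rightarrow> real"
    and M :: "'w measure" and pol :: "'w \<Rightarrow> policy"
  assumes "1 \<le> K"
    and "0 \<le> f 0"
    and "\<forall>k\<in>{1..K}. 0 < f k"
    and "randomized_policy K f M pol"
  shows "R_inv K f M pol \<ge> ereal ((f 0 + (\<Sum>k\<in>{1..K}. f k)) / Min (f ` {1..K}))"
proof -
  have "Min (f ` {1..K}) \<in> f ` {1..K}" using assms(1) by (intro Min_in) auto
  then obtain ks where ks: "ks \<in> {1..K}" and ks_min: "f ks = Min (f ` {1..K})" by auto
  have f_ks: "0 < f ks" using assms(3) ks by blast
  have f_nonneg: "\<forall>k\<le>K. 0 \<le> f k"
  proof (intro allI impI)
    fix k assume "k \<le> K"
    then show "0 \<le> f k" using assms(2,3) by (cases "k = 0") (auto intro: less_imp_le)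
  qed
  have hard: "hard_instance K f ks L" if "0 < L" for L
    using ks that f_nonneg by unfold_locales
  note lim = tendsto_ereal[OF hard_ratio_tendsto[OF f_ks, of "\<Sum>k\<le>K. f k" "real (Suc K)"]]
  have "ereal ((\<Sum>k\<le>K. f k) / f ks) \<le> R_inv K f M pol"
    using hard_instance.R_inv_ge_hard_ratio[OF hard assms(4)] hard_instance.F_def[OF hard]
    by (intro LIMSEQ_le_const2[OF lim] exI[of _ 1]) auto
  moreover have "(\<Sum>k\<le>K. f k) = f 0 + (\<Sum>k\<in>{1..K}. f k)"
    by (simp add: atMost_atLeast0 sum.atLeast_Suc_atMost)
  ultimately show ?thesis using ks_min by simp
qed

end
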